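(* Let $P$ be a defining matrix as in the context. Then $\gcd(M(P))=\gcd(M'(P))$.
   Context: Fix integers $r\ge1$, $n_0,\dots,n_r\ge1$, vectors $l_i=(l_{i1},\dots,l_{in_i})\in\mathbb{Z}_{\ge1}^{n_i}$, $d_i\in\mathbb{Z}^{n_i}$ with $\gcd(l_{ij},d_{ij})=1$ and $d_{i1}/l_{i1}>\dots>d_{in_i}/l_{in_i}$. With $e_1,\dots,e_{r+1}$ the standard basis of $\mathbb{Z}^{r+1}$, $u=e_{r+1}$, $e_0=-(e_1+\dots+e_r)$, let $v_{ij}=l_{ij}e_i+d_{ij}u$. $P$ is the integral matrix with columns $v_{ij}$ ($0\le i\le r$, $1\le j\le n_i$) in type (ee), these together with $u$ in type (pe), with $-u$ in type (ep), with $u$ and $-u$ in type (pp); $P$ is a defining matrix if its columns generate $\mathbb{Q}^{r+1}$ as a convex cone. $M(P)$ is the set of absolute values of all $(r+1)\times(r+1)$ minors of $P$ (formed from sets of $r+1$ distinct columns). Set $\mu(j_0,\dots,j_r)=\sum_{i_0=0}^rd_{i_0j_{i_0}}\prod_{i\ne i_0}l_{ij_i}$, $\hat\mu=\mu(n_0,\dots,n_r)$, $\hat\nu(i,j)=l_{ij}d_{in_i}-l_{in_i}d_{ij}$. In type (ee), $M'(P)=\{|\hat\mu|\}\cup\{|\hat\nu(i_0,j_{i_0})|\prod_{i\ne i_0,i_1}l_{ij_i}\ ;\ 0\le i_0,i_1\le r,\ i_0\ne i_1,\ 1\le j_i\le n_i\text{ for all }i\ne i_1\}$; in types (pe),(ep),(pp),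 $M'(P)=\{\prod_{i\ne i_1}l_{ij_i}\ ;\ 0\le i_1\le r,\ 1\le j_i\le n_i\text{ for all }i\ne i_1\}$. *)

theory Defs
  imports Main "Jordan_Normal_Form.Determinant"
begin

text \<open>Vectors of Z^(r+1) are functions nat => int on coordinates 1..r+1;
  coordinate k corresponds to e_k, coordinate r+1 to u.\<close>

datatype ptype = EE | PE | EP | PP

text \<open>Column labels: V i j is the column v_ij, Up is u, Down is -u.\<close>
datatype col = V nat nat | Up | Down

definition basis_e :: "nat \<Rightarrow> nat \<Rightarrow> nat \<Rightarrow> int" where
  "basis_e r i k = (if i = 0 then (if 1 \<le> k \<and> k \<le> r then -1 else 0)
                    else (if k = i then 1 else 0))"

definition uvec :: "nat \<Rightarrow> nat \<Rightarrow> int" where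
  "uvec r k = (if k = r + 1 then 1 else 0)"

definition colvec :: "nat \<Rightarrow> (nat \<Rightarrow> nat \<Rightarrow> int) \<Rightarrow> (nat \<Rightarrow> nat \<Rightarrow> int) \<Rightarrow> col \<Rightarrow> nat \<Rightarrow> int" where
  "colvec r l d c k = (case c of
      V i j \<Rightarrow> l i j * basis_e r i k + d i j * uvec r k
    | Up \<Rightarrow> uvec r k
    | Down \<Rightarrow> - uvec r k)"

definition vcols :: "nat \<Rightarrow> (nat \<Rightarrow> nat) \<Rightarrow> col set" where
  "vcols r n = {V i j | i j. i \<le> r \<and> 1 \<le> j \<and> j \<le> n i}"

definition cols :: "ptype \<Rightarrow> nat \<Rightarrow> (nat \<Rightarrow> nat) \<Rightarrow> col set" where
  "cols t r n = (case t of
      EE \<Rightarrow> vcols r n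
    | PE \<Rightarrow> vcols r n \<union> {Up}
    | EP \<Rightarrow> vcols r n \<union> {Down}
    | PP \<Rightarrow> vcols r n \<union> {Up, Down})"

definition valid_data :: "nat \<Rightarrow> (nat \<Rightarrow> nat) \<Rightarrow> (nat \<Rightarrow> nat \<Rightarrow> int) \<Rightarrow> (nat \<Rightarrow> nat \<Rightarrow> int) \<Rightarrow> bool" where
  "valid_data r n l d \<longleftrightarrow> r \<ge> 1 \<and>
     (\<forall>i\<le>r. n i \<ge> 1) \<and>
     (\<forall>i\<le>r. \<forall>j. 1 \<le> j \<and> j \<le> n i \<longrightarrow> l i j \<ge> 1 \<and> gcd (l i j) (d i j) = 1) \<and>
     (\<forall>i\<le>r. \<forall>j j'. 1 \<le> j \<and> j < j' \<and> j' \<le> n i \<longrightarrow>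
        (of_int (d i j) / of_int (l i j) :: rat) > of_int (d i j') / of_int (l i j'))"

definition defining_matrix :: "ptype \<Rightarrow> nat \<Rightarrow> (nat \<Rightarrow> nat) \<Rightarrow> (nat \<Rightarrow> nat \<Rightarrow> int) \<Rightarrow> (nat \<Rightarrow> nat \<Rightarrow> int) \<Rightarrow> bool" where
  "defining_matrix t r n l d \<longleftrightarrow>
     (\<forall>x :: nat \<Rightarrow> rat. \<exists>c :: col \<Rightarrow> rat. (\<forall>k\<in>cols t r n. c k \<ge> 0) \<and>
        (\<forall>i\<in>{1..r+1}. x i = (\<Sum>k\<in>cols t r n. c k * of_int (colvec r l d k i))))"

definition minors_abs :: "ptype \<Rightarrow> nat \<Rightarrow> (nat \<Rightarrow> nat) \<Rightarrow> (nat \<Rightarrow> nat \<Rightarrow> int) \<Rightarrow> (nat \<Rightarrow> nat \<Rightarrow> int) \<Rightarrow> int set" where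
  "minors_abs t r n l d =
     {\<bar>det (mat (r+1) (r+1) (\<lambda>(a, b). colvec r l d (f b) (a + 1)))\<bar> | f.
        f ` {0..<r+1} \<subseteq> cols t r n \<and> inj_on f {0..<r+1}}"

definition mu_hat :: "nat \<Rightarrow> (nat \<Rightarrow> nat) \<Rightarrow> (nat \<Rightarrow> nat \<Rightarrow> int) \<Rightarrow> (nat \<Rightarrow> nat \<Rightarrow> int) \<Rightarrow> int" where
  "mu_hat r n l d = (\<Sum>i0\<in>{0..r}. d i0 (n i0) * (\<Prod>i\<in>{0..r} - {i0}. l i (n i)))"

definition nu_hat :: "(nat \<Rightarrow> nat) \<Rightarrow> (nat \<Rightarrow> nat \<Rightarrow> int) \<Rightarrow> (nat \<Rightarrow> nat \<Rightarrow> int) \<Rightarrow> nat \<Rightarrow> nat \<Rightarrow> int" where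
  "nu_hat n l d i j = l i j * d i (n i) - l i (n i) * d i j"

definition M'_set :: "ptype \<Rightarrow> nat \<Rightarrow> (nat \<Rightarrow> nat) \<Rightarrow> (nat \<Rightarrow> nat \<Rightarrow> int) \<Rightarrow> (nat \<Rightarrow> nat \<Rightarrow> int) \<Rightarrow> int set" where
  "M'_set t r n l d = (if t = EE then
      {\<bar>mu_hat r n l d\<bar>} \<union>
      {\<bar>nu_hat n l d i0 (j i0)\<bar> * (\<Prod>i\<in>{0..r} - {i0, i1}. l i (j i)) | i0 i1 j.
         i0 \<le> r \<and> i1 \<le> r \<and> i0 \<noteq> i1 \<and> (\<forall>i\<in>{0..r} - {i1}. 1 \<le> j i \<and> j i \<le> n i)}
    else
      {(\<Prod>i\<in>{0..r} - {i1}. l i (j i)) | i1 j.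
         i1 \<le> r \<and> (\<forall>i\<in>{0..r} - {i1}. 1 \<le> j i \<and> j i \<le> n i)})"

end

theory Submission
  imports Defs
begin

text \<open>
  A minor of P is the determinant of a matrix whose column b is w_b e_(k_b) + y_b u.
  Expanding along the u-row gives det = \<Sum>_b y_b \<epsilon>_b \<Prod>_(c \<noteq> b) w_c, where \<epsilon>_b is the
  cofactor for unit weights. It vanishes when two columns other than b share a block; since
  e_0 + ... + e_r = 0 all \<epsilon>_b agree when the blocks are pairwise distinct, and
  \<epsilon>_b1 = -\<epsilon>_b2 when only b1 and b2 share a block. Hence a minor is a multiple of some
  \<mu>(j), of a cross term (d_ij l_ij' - d_ij' l_ij) times a product of l's, or (in types pe,
  ep, pp) a combination of products of l's over all blocks but one. The Bezout relations
  u l_(i n_i) + v d_(i n_i) = 1 reduce \<mu>(j) and the cross terms to \<mu>-hat and the \<nu>-hat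
  products, one index j_i at a time. Conversely, when the blocks of the first r columns are
  enumerated by skip_index, the cofactor is \<plusminus>1, so each element of M'(P) is a minor up to
  sign.
\<close>

lemma sum_two_terms:
  assumes "finite A" "b1 \<in> A" "b2 \<in> A" "b1 \<noteq> b2" "\<And>c. c \<in> A \<Longrightarrow> c \<noteq> b1 \<Longrightarrow> c \<noteq> b2 \<Longrightarrow> g c = 0"
  shows "sum g A = g b1 + g b2"
proof -
  have "sum g A = sum g {b1, b2}"
    using assms by (intro sum.mono_neutral_right) auto
  then show ?thesis using assms(4) by simp
qed

lemma obtain_block_index:
  assumes "inj_on k S" "\<And>c. c \<in> S \<Longrightarrow> P (k c) (jf c)"
  obtains J where "\<And>c. c \<in> S \<Longrightarrow> jf c = J (k c)" "\<And>i. i \<in> k ` S \<Longrightarrow> P i (J i)"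
proof
  let ?J = "\<lambda>i. jf (inv_into S k i)"
  show "jf c = ?J (k c)" if "c \<in> S" for c using assms(1) that by simp
  show "P i (?J i)" if "i \<in> k ` S" for i using assms that by auto
qed

lemma obtain_block_prod:
  assumes "inj_on k S" "\<And>c. c \<in> S \<Longrightarrow> 1 \<le> jf c \<and> jf c \<le> n (k c)"
  obtains J where "(\<Prod>c\<in>S. l (k c) (jf c)) = (\<Prod>i\<in>k ` S. l i (J i))"
    "\<And>i. i \<in> k ` S \<Longrightarrow> 1 \<le> J i \<and> J i \<le> n i"
proof -
  obtain J where J: "\<And>c. c \<in> S \<Longrightarrow> jf c = J (k c)"
    and J_range: "\<And>i. i \<in> k ` S \<Longrightarrow> 1 \<le> J i \<and> J i \<le> n i"
    using obtain_block_index[OF assms(1), of "\<lambda>i j. 1 \<le> j \<and> j \<le> n i"] assms(2) by auto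
  have "(\<Prod>c\<in>S. l (k c) (jf c)) = (\<Prod>i\<in>k ` S. l i (J i))"
    unfolding prod.reindex[OF assms(1)] by (rule prod.cong) (auto simp: J)
  from this J_range show ?thesis by (rule that)
qed

lemma inj_on_image_eq_Diff:
  assumes "finite T" "inj_on k S" "k ` S \<subseteq> T" "card T = Suc (card S)"
  obtains i where "i \<in> T" "k ` S = T - {i}"
proof -
  have "card (k ` S) = card S" using assms(2) by (rule card_image)
  then have "k ` S \<noteq> T" using assms(4) by auto
  then obtain i where i: "i \<in> T" "i \<notin> k ` S" using assms(3) by blast
  then have "k ` S \<subseteq> T - {i}" "card (T - {i}) = card (k ` S)"
    using assms \<open>card (k ` S) = card S\<close> by auto
  then have "k ` S = T - {i}" using assms(1) by (intro card_subset_eq) auto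
  with i(1) show ?thesis by (rule that)
qed

lemma det_mat_diag: "det (mat_diag n s) = (\<Prod>i<n. s i)"
proof -
  have "upper_triangular (mat_diag n s)" by (auto simp: upper_triangular_def mat_diag_def)
  then have "det (mat_diag n s) = prod_list (diag_mat (mat_diag n s))"
    by (rule det_upper_triangular[OF _ mat_diag_dim])
  then show ?thesis by (simp add: prod_list_diag_prod mat_diag_def atLeast0LessThan)
qed

section \<open>Determinants of block column matrices\<close>

text \<open>Column b of col_mat r k w y is w b \<cdot> e_(k b) + y b \<cdot> u; row a < r holds coordinate
  a + 1 and row r the u-coordinate.\<close>

definition col_mat :: "nat \<Rightarrow> (nat \<Rightarrow> nat) \<Rightarrow> (nat \<Rightarrow> int) \<Rightarrow> (nat \<Rightarrow> int) \<Rightarrow> int mat" where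
  "col_mat r k w y = mat (Suc r) (Suc r) (\<lambda>(a, b). if a < r then w b * basis_e r (k b) (Suc a) else y b)"

text \<open>The cofactor of the u-row does not depend on that row, which is therefore set to 0.\<close>

definition last_cofactor :: "nat \<Rightarrow> (nat \<Rightarrow> nat) \<Rightarrow> (nat \<Rightarrow> int) \<Rightarrow> nat \<Rightarrow> int" where
  "last_cofactor r k w b = cofactor (col_mat r k w (\<lambda>_. 0)) r b"

definition unit_cofactor :: "nat \<Rightarrow> (nat \<Rightarrow> nat) \<Rightarrow> nat \<Rightarrow> int" where
  "unit_cofactor r k b = last_cofactor r k (\<lambda>_. 1) b"

definition prod_others :: "nat \<Rightarrow> (nat \<Rightarrow> int) \<Rightarrow> nat \<Rightarrow> int" where
  "prod_others r w b = (\<Prod>c\<in>{0..<Suc r} - {b}. w c)"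

lemma col_mat_carrier [simp]: "col_mat r k w y \<in> carrier_mat (Suc r) (Suc r)"
  by (simp add: col_mat_def)

lemma cofactor_col_mat_cong:
  assumes "\<And>c. c \<noteq> b \<Longrightarrow> w c = w' c"
  shows "cofactor (col_mat r k w y) r b = cofactor (col_mat r k w' y') r b"
proof -
  have "mat_delete (col_mat r k w y) r b = mat_delete (col_mat r k w' y') r b"
    by (rule eq_matI) (auto simp: mat_delete_def col_mat_def assms)
  then show ?thesis by (simp add: cofactor_def)
qed

lemma det_col_mat: "det (col_mat r k w y) = (\<Sum>b<Suc r. y b * last_cofactor r k w b)"
proof -
  have "det (col_mat r k w y) = (\<Sum>b<Suc r. col_mat r k w y $$ (r, b) * cofactor (col_mat r k w y) r b)"
    by (rule laplace_expansion_row) auto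
  also have "\<dots> = (\<Sum>b<Suc r. y b * last_cofactor r k w b)"
    unfolding last_cofactor_def
    by (intro sum.cong refl arg_cong2[where f = "(*)"] cofactor_col_mat_cong) (auto simp: col_mat_def)
  finally show ?thesis .
qed

lemma last_cofactor_cong:
  "(\<And>c. c \<noteq> b \<Longrightarrow> w c = w' c) \<Longrightarrow> last_cofactor r k w b = last_cofactor r k w' b"
  unfolding last_cofactor_def by (rule cofactor_col_mat_cong)

lemma det_col_mat_unit:
  "b < Suc r \<Longrightarrow> det (col_mat r k w (\<lambda>c. of_bool (c = b))) = last_cofactor r k w b"
  by (simp add: det_col_mat if_distrib cong: if_cong)

lemma col_mat_mult_diag:
  "col_mat r k w y * mat_diag (Suc r) s = col_mat r k (\<lambda>c. w c * s c) (\<lambda>c. y c * s c)"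
  by (rule eq_matI) (auto simp: mat_diag_mult_right[of _ "Suc r"] col_mat_def)

lemma last_cofactor_factor:
  assumes "b < Suc r"
  shows "last_cofactor r k w b = unit_cofactor r k b * prod_others r w b"
proof -
  let ?s = "\<lambda>c. if c = b then 1 else w c"
  \<comment> \<open>column b is deleted in the cofactor; the other weights come out of a diagonal factor\<close>
  have "last_cofactor r k w b = last_cofactor r k ?s b"
    by (rule last_cofactor_cong) simp
  also have "\<dots> = det (col_mat r k (\<lambda>_. 1) (\<lambda>c. of_bool (c = b)) * mat_diag (Suc r) ?s)"
  proof -
    have "(\<lambda>c. of_bool (c = b) * ?s c) = (\<lambda>c. of_bool (c = b))" by auto
    then show ?thesis using assms by (simp add: col_mat_mult_diag det_col_mat_unit[symmetric])
  qed
  also have "\<dots> = unit_cofactor r k b * (\<Prod>c<Suc r. ?s c)"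
    using assms by (simp add: det_mult[of _ "Suc r"] det_mat_diag det_col_mat_unit unit_cofactor_def)
  also have "(\<Prod>c<Suc r. ?s c) = prod_others r w b"
    unfolding prod_others_def atLeast0LessThan using assms
    by (subst prod.remove[of _ b]) (auto intro: prod.cong)
  finally show ?thesis .
qed

lemma prod_others_cong:
  "(\<And>c. c < Suc r \<Longrightarrow> c \<noteq> b \<Longrightarrow> w c = w' c) \<Longrightarrow> prod_others r w b = prod_others r w' b"
  unfolding prod_others_def by (rule prod.cong) auto

lemma prod_others_reindex:
  assumes "bij_betw k {0..<Suc r} T" "b < Suc r"
  shows "prod_others r (\<lambda>c. g (k c)) b = (\<Prod>i\<in>T - {k b}. g i)"
proof -
  have "bij_betw k ({0..<Suc r} - {b}) (T - {k b})"
    using assms by (intro bij_betw_DiffI) (auto simp: bij_betw_def)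
  then show ?thesis unfolding prod_others_def by (rule prod.reindex_bij_betw)
qed

lemma det_col_mat_factor:
  "det (col_mat r k w y) = (\<Sum>b<Suc r. y b * unit_cofactor r k b * prod_others r w b)"
  unfolding det_col_mat by (intro sum.cong refl) (simp add: last_cofactor_factor)

lemma det_col_mat_eq_0:
  assumes "b0 < Suc r" "v b0 \<noteq> 0"
    and "\<And>a. a < r \<Longrightarrow> (\<Sum>b<Suc r. w b * basis_e r (k b) (Suc a) * v b) = 0"
    and "(\<Sum>b<Suc r. y b * v b) = 0"
  shows "det (col_mat r k w y) = 0"
proof -
  let ?v = "vec (Suc r) v"
  have "?v \<noteq> 0\<^sub>v (Suc r)" using assms(1,2) by (metis index_vec index_zero_vec(1))
  moreover have "col_mat r k w y *\<^sub>v ?v = 0\<^sub>v (Suc r)"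
  proof (rule eq_vecI)
    fix i assume i: "i < dim_vec (0\<^sub>v (Suc r) :: int vec)"
    have "(col_mat r k w y *\<^sub>v ?v) $ i =
        (\<Sum>b<Suc r. (if i < r then w b * basis_e r (k b) (Suc i) else y b) * v b)"
      using i by (simp add: col_mat_def scalar_prod_def atLeast0LessThan)
    also have "\<dots> = 0" using assms(3,4) by (cases "i < r") auto
    finally show "(col_mat r k w y *\<^sub>v ?v) $ i = 0\<^sub>v (Suc r) $ i" using i by simp
  qed (simp add: col_mat_def)
  ultimately show ?thesis
    using det_0_iff_vec_prod_zero[OF col_mat_carrier] vec_carrier by blast
qed

lemma unit_cofactor_eq_0_if_repeated:
  assumes "b1 \<noteq> b2" "b1 \<noteq> b" "b2 \<noteq> b" "b1 < Suc r" "b2 < Suc r" "b < Suc r" "k b1 = k b2"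
  shows "unit_cofactor r k b = 0"
proof -
  have "det (col_mat r k (\<lambda>_. 1) (\<lambda>c. of_bool (c = b))) = 0"
    by (rule det_col_mat_eq_0[of b1 _ "\<lambda>c. of_bool (c = b1) - of_bool (c = b2)"])
      (use assms in \<open>simp_all add: algebra_simps sum_subtractf if_distrib cong: if_cong\<close>)
  then show ?thesis using assms(6) by (simp add: det_col_mat_unit unit_cofactor_def)
qed

lemma unit_cofactor_swap:
  assumes "b1 \<noteq> b2" "b1 < Suc r" "b2 < Suc r" "k b1 = k b2"
  shows "unit_cofactor r k b2 = - unit_cofactor r k b1"
proof -
  let ?y = "\<lambda>c. of_bool (c = b1) + of_bool (c = b2) :: int"
  have "det (col_mat r k (\<lambda>_. 1) ?y) = 0"
    by (rule det_col_mat_eq_0[of b1 _ "\<lambda>c. of_bool (c = b1) - of_bool (c = b2)"])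
      (use assms in \<open>simp_all add: algebra_simps sum_subtractf sum.distrib if_distrib cong: if_cong\<close>)
  moreover have "det (col_mat r k (\<lambda>_. 1) ?y) = unit_cofactor r k b1 + unit_cofactor r k b2"
    using assms by (simp add: det_col_mat algebra_simps sum.distrib if_distrib unit_cofactor_def cong: if_cong)
  ultimately show ?thesis by simp
qed

lemma sum_basis_e: "a < r \<Longrightarrow> (\<Sum>i\<in>{0..r}. basis_e r i (Suc a)) = 0"
proof -
  assume a: "a < r"
  have "{0..r} = insert 0 {1..r}" by auto
  then have "(\<Sum>i\<in>{0..r}. basis_e r i (Suc a)) = -1 + (\<Sum>i\<in>{1..r}. of_bool (i = Suc a))"
    using a by (simp add: basis_e_def)
  also have "\<dots> = 0" using a by simp
  finally show ?thesis .
qed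

lemma unit_cofactor_eq_if_bij:
  assumes bij: "bij_betw k {0..<Suc r} {0..r}" and b: "b < Suc r"
  shows "unit_cofactor r k b = unit_cofactor r k r"
proof -
  let ?y = "\<lambda>c. of_bool (c = b) - of_bool (c = r) :: int"
  \<comment> \<open>the all-ones vector is in the kernel because e_0 + ... + e_r = 0\<close>
  have "det (col_mat r k (\<lambda>_. 1) ?y) = 0"
  proof (rule det_col_mat_eq_0[of 0 _ "\<lambda>_. 1"])
    fix a assume "a < r"
    have "(\<Sum>c<Suc r. basis_e r (k c) (Suc a)) = (\<Sum>i\<in>{0..r}. basis_e r i (Suc a))"
      using sum.reindex_bij_betw[OF bij] by (simp add: atLeast0LessThan)
    with sum_basis_e[OF \<open>a < r\<close>] show "(\<Sum>c<Suc r. 1 * basis_e r (k c) (Suc a) * 1) = 0" by simp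
  qed (use b in \<open>simp_all add: sum_subtractf\<close>)
  moreover have "det (col_mat r k (\<lambda>_. 1) ?y) = unit_cofactor r k b - unit_cofactor r k r"
    using b by (simp add: det_col_mat algebra_simps sum_subtractf if_distrib unit_cofactor_def cong: if_cong)
  ultimately show ?thesis by simp
qed

lemma det_col_mat_bij:
  assumes "bij_betw k {0..<Suc r} {0..r}"
  shows "det (col_mat r k w y) = unit_cofactor r k r * (\<Sum>b<Suc r. y b * prod_others r w b)"
  unfolding det_col_mat_factor sum_distrib_left
proof (rule sum.cong[OF refl])
  fix b assume "b \<in> {..<Suc r}"
  then show "y b * unit_cofactor r k b * prod_others r w b = unit_cofactor r k r * (y b * prod_others r w b)"
    using unit_cofactor_eq_if_bij[OF assms, of b] by simp
qed

lemma prod_others_split: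
  "b1 \<noteq> b2 \<Longrightarrow> b2 < Suc r \<Longrightarrow> prod_others r w b1 = w b2 * (\<Prod>c\<in>{0..<Suc r} - {b1, b2}. w c)"
proof -
  assume "b1 \<noteq> b2" "b2 < Suc r"
  then have "prod_others r w b1 = w b2 * (\<Prod>c\<in>{0..<Suc r} - {b1} - {b2}. w c)"
    unfolding prod_others_def by (subst prod.remove[of _ b2]) auto
  also have "{0..<Suc r} - {b1} - {b2} = {0..<Suc r} - {b1, b2}" by auto
  finally show ?thesis .
qed

lemma det_col_mat_repeated:
  assumes "b1 \<noteq> b2" "b1 < Suc r" "b2 < Suc r" "k b1 = k b2"
  shows "det (col_mat r k w y) =
    unit_cofactor r k b1 * (\<Prod>c\<in>{0..<Suc r} - {b1, b2}. w c) * (y b1 * w b2 - y b2 * w b1)"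
proof -
  have "det (col_mat r k w y) =
      y b1 * unit_cofactor r k b1 * prod_others r w b1 + y b2 * unit_cofactor r k b2 * prod_others r w b2"
    unfolding det_col_mat_factor
    by (rule sum_two_terms) (use assms unit_cofactor_eq_0_if_repeated[OF assms(1)] in simp_all)
  moreover have "prod_others r w b2 = w b1 * (\<Prod>c\<in>{0..<Suc r} - {b1, b2}. w c)"
    using assms prod_others_split[of b2 b1] by (simp add: insert_commute)
  ultimately show ?thesis
    using assms by (simp add: unit_cofactor_swap prod_others_split[of b1 b2] algebra_simps)
qed

definition basis_mat :: "nat \<Rightarrow> (nat \<Rightarrow> nat) \<Rightarrow> int mat" where
  "basis_mat r k = mat r r (\<lambda>(a, c). basis_e r (k c) (Suc a))"

lemma unit_cofactor_last: "unit_cofactor r k r = det (basis_mat r k)"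
proof -
  have "mat_delete (col_mat r k (\<lambda>_. 1) (\<lambda>_. 0)) r r = basis_mat r k"
    by (rule eq_matI) (auto simp: mat_delete_def col_mat_def basis_mat_def)
  then show ?thesis by (simp add: unit_cofactor_def last_cofactor_def cofactor_def)
qed

text \<open>skip_index i enumerates {0..r} - {i}; for this enumeration the basis matrix is an
  involution, which pins its determinant to \<plusminus>1.\<close>

definition skip_index :: "nat \<Rightarrow> nat \<Rightarrow> nat" where
  "skip_index i a = (if Suc a = i then 0 else Suc a)"

lemma skip_index_bij: "i \<le> r \<Longrightarrow> bij_betw (skip_index i) {0..<r} ({0..r} - {i})"
proof -
  assume i: "i \<le> r"
  have "{0..r} - {i} \<subseteq> skip_index i ` {0..<r}"
  proof
    fix x assume x: "x \<in> {0..r} - {i}"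
    have "x = skip_index i (if x = 0 then i - 1 else x - 1)" using x by (auto simp: skip_index_def)
    moreover have "(if x = 0 then i - 1 else x - 1) < r" using x i by auto
    ultimately show "x \<in> skip_index i ` {0..<r}" by force
  qed
  moreover have "skip_index i ` {0..<r} \<subseteq> {0..r} - {i}" by (auto simp: skip_index_def)
  moreover have "inj_on (skip_index i) {0..<r}" by (auto simp: inj_on_def skip_index_def split: if_splits)
  ultimately show ?thesis by (auto simp: bij_betw_def)
qed

lemma basis_mat_skip_index:
  "x < r \<Longrightarrow> a < r \<Longrightarrow>
    basis_mat r (skip_index i) $$ (x, a) = (if Suc a = i then -1 else of_bool (x = a))"
  by (auto simp: basis_mat_def skip_index_def basis_e_def)

lemma basis_mat_skip_index_square:
  "basis_mat r (skip_index i) * basis_mat r (skip_index i) = 1\<^sub>m r"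
proof (rule eq_matI)
  fix x y assume "x < dim_row (1\<^sub>m r :: int mat)" "y < dim_col (1\<^sub>m r :: int mat)"
  then have x: "x < r" and y: "y < r" by auto
  let ?E = "basis_mat r (skip_index i)"
  have "(?E * ?E) $$ (x, y) = (\<Sum>a<r. ?E $$ (x, a) * ?E $$ (a, y))"
    using x y by (simp add: basis_mat_def scalar_prod_def atLeast0LessThan)
  also have "\<dots> = of_bool (x = y)"
  proof (cases "Suc y = i")
    case True
    then have "(\<Sum>a<r. ?E $$ (x, a) * ?E $$ (a, y)) = - (\<Sum>a<r. ?E $$ (x, a))"
      using y by (simp add: basis_mat_skip_index sum_negf)
    also have "(\<Sum>a<r. ?E $$ (x, a)) = (if x = y then -1 else 0)"
    proof (cases "x = y")
      case True
      have "(\<Sum>a<r. ?E $$ (x, a)) = (\<Sum>a<r. if a = y then -1 else 0)"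
        using x \<open>Suc y = i\<close> True by (intro sum.cong) (auto simp: basis_mat_skip_index)
      then show ?thesis using y True by simp
    next
      case False
      have "(\<Sum>a<r. ?E $$ (x, a)) = ?E $$ (x, y) + ?E $$ (x, x)"
        by (rule sum_two_terms) (use False x y \<open>Suc y = i\<close> in \<open>auto simp: basis_mat_skip_index\<close>)
      then show ?thesis using False x y \<open>Suc y = i\<close> by (simp add: basis_mat_skip_index)
    qed
    finally show ?thesis by simp
  next
    case False
    then have "(\<Sum>a<r. ?E $$ (x, a) * ?E $$ (a, y)) = (\<Sum>a<r. if a = y then ?E $$ (x, y) else 0)"
      using y by (intro sum.cong) (auto simp: basis_mat_skip_index)
    then show ?thesis using x y False by (simp add: basis_mat_skip_index)
  qed
  finally show "(?E * ?E) $$ (x, y) = 1\<^sub>m r $$ (x, y)" using x y by simp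
qed (auto simp: basis_mat_def)

lemma abs_unit_cofactor_skip_index:
  assumes "\<And>c. c < r \<Longrightarrow> k c = skip_index i c"
  shows "\<bar>unit_cofactor r k r\<bar> = 1"
proof -
  have "basis_mat r k = basis_mat r (skip_index i)"
    by (rule eq_matI) (auto simp: basis_mat_def assms)
  moreover have "basis_mat r (skip_index i) \<in> carrier_mat r r" by (simp add: basis_mat_def)
  then have "det (basis_mat r (skip_index i)) * det (basis_mat r (skip_index i)) = 1"
    using det_mult basis_mat_skip_index_square by (metis det_one)
  ultimately have "det (basis_mat r k) = 1 \<or> det (basis_mat r k) = -1"
    using zmult_eq_1_iff by simp
  then show ?thesis by (auto simp: unit_cofactor_last)
qed

section \<open>Reduction to M'(P) by Bezout relations\<close>

definition mu :: "nat \<Rightarrow> (nat \<Rightarrow> nat \<Rightarrow> int) \<Rightarrow> (nat \<Rightarrow> nat \<Rightarrow> int) \<Rightarrow> (nat \<Rightarrow> nat) \<Rightarrow> int" where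
  "mu r l d j = (\<Sum>i0\<in>{0..r}. d i0 (j i0) * (\<Prod>i\<in>{0..r} - {i0}. l i (j i)))"

lemma mu_hat_eq_mu: "mu_hat r n l d = mu r l d n"
  by (simp add: mu_hat_def mu_def)

lemma mu_cong: "(\<And>i. i \<le> r \<Longrightarrow> j i = j' i) \<Longrightarrow> mu r l d j = mu r l d j'"
  unfolding mu_def by (intro sum.cong prod.cong) auto

lemma mu_split:
  assumes "m \<le> r"
  shows "mu r l d j = d m (j m) * (\<Prod>i\<in>{0..r} - {m}. l i (j i)) +
    l m (j m) * (\<Sum>i\<in>{0..r} - {m}. d i (j i) * (\<Prod>i'\<in>{0..r} - {i, m}. l i' (j i')))"
proof -
  have "(\<Prod>i'\<in>{0..r} - {i}. l i' (j i')) = l m (j m) * (\<Prod>i'\<in>{0..r} - {i, m}. l i' (j i'))"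
    if "i \<in> {0..r} - {m}" for i
  proof -
    have "(\<Prod>i'\<in>{0..r} - {i}. l i' (j i')) = l m (j m) * (\<Prod>i'\<in>{0..r} - {i} - {m}. l i' (j i'))"
      using that assms by (subst prod.remove[of _ m]) auto
    also have "{0..r} - {i} - {m} = {0..r} - {i, m}" by auto
    finally show ?thesis .
  qed
  then have "mu r l d j = d m (j m) * (\<Prod>i\<in>{0..r} - {m}. l i (j i)) +
      (\<Sum>i\<in>{0..r} - {m}. l m (j m) * (d i (j i) * (\<Prod>i'\<in>{0..r} - {i, m}. l i' (j i'))))"
    unfolding mu_def using assms by (subst sum.remove[of _ m]) (auto intro!: sum.cong)
  then show ?thesis by (simp add: sum_distrib_left)
qed

lemma dvd_mu_update:
  fixes g :: int
  assumes r: "1 \<le> r" and m: "m \<le> r" and jm: "j m = n m"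
    and bezout: "u * l m (n m) + v * d m (n m) = 1"
    and mu: "g dvd mu r l d j"
    and nu: "\<And>i. i \<le> r \<Longrightarrow> i \<noteq> m \<Longrightarrow> g dvd nu_hat n l d m x * (\<Prod>i'\<in>{0..r} - {m, i}. l i' (j i'))"
  shows "g dvd mu r l d (j(m := x))"
proof -
  let ?Q = "\<Prod>i\<in>{0..r} - {m}. l i (j i)"
  let ?S = "\<Sum>i\<in>{0..r} - {m}. d i (j i) * (\<Prod>i'\<in>{0..r} - {i, m}. l i' (j i'))"
  let ?nu = "nu_hat n l d m x"
  have "(\<Prod>i\<in>{0..r} - {m}. l i ((j(m := x)) i)) = ?Q" by (rule prod.cong) auto
  moreover have "(\<Sum>i\<in>{0..r} - {m}. d i ((j(m := x)) i) * (\<Prod>i'\<in>{0..r} - {i, m}. l i' ((j(m := x)) i'))) = ?S"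
    by (intro sum.cong arg_cong2[where f = "(*)"] prod.cong) auto
  ultimately have mu_x: "mu r l d (j(m := x)) = d m x * ?Q + l m x * ?S"
    using mu_split[OF m, of l d "j(m := x)"] by simp
  have "mu r l d (j(m := x)) = u * (l m x * mu r l d j - ?nu * ?Q) + v * (d m x * mu r l d j + ?nu * ?S)"
  proof -
    have "u * (l m x * mu r l d j - ?nu * ?Q) + v * (d m x * mu r l d j + ?nu * ?S)
        = (u * l m (n m) + v * d m (n m)) * (d m x * ?Q + l m x * ?S)"
      unfolding mu_split[OF m, of l d j] nu_hat_def jm by (simp add: algebra_simps)
    then show ?thesis using bezout mu_x by simp
  qed
  moreover have "g dvd ?nu * ?Q"
  proof -
    define i where "i = (if m = 0 then 1 else (0::nat))"
    have i: "i \<le> r" "i \<noteq> m" using r by (auto simp: i_def)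
    have "?Q = l i (j i) * (\<Prod>i'\<in>{0..r} - {m} - {i}. l i' (j i'))"
      using i by (subst prod.remove[of _ i]) auto
    also have "{0..r} - {m} - {i} = {0..r} - {m, i}" by auto
    finally show ?thesis using nu[OF i] by (simp add: mult.left_commute)
  qed
  moreover have "g dvd ?nu * ?S"
    unfolding sum_distrib_left
    by (rule dvd_sum) (use nu in \<open>auto simp: insert_commute mult.left_commute\<close>)
  ultimately show ?thesis using mu by (simp add: dvd_add dvd_diff)
qed

lemma bezout_dvd_cross:
  fixes g :: int
  assumes "u * l0 + v * d0 = 1"
    and "g dvd (l1 * d0 - l0 * d1) * p" "g dvd (l2 * d0 - l0 * d2) * p"
  shows "g dvd (d1 * l2 - d2 * l1) * p"
proof -
  have "(d1 * l2 - d2 * l1) * p = (u * l0 + v * d0) * (d1 * l2 - d2 * l1) * p" using assms(1) by simp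
  also have "\<dots> = - u * (l2 * ((l1 * d0 - l0 * d1) * p) - l1 * ((l2 * d0 - l0 * d2) * p))
      - v * (d2 * ((l1 * d0 - l0 * d1) * p) - d1 * ((l2 * d0 - l0 * d2) * p))"
    by (simp add: algebra_simps)
  finally show ?thesis using assms(2,3) by (simp add: dvd_diff)
qed

lemma valid_data_bezout:
  assumes "valid_data r n l d" "i \<le> r"
  obtains u v where "u * l i (n i) + v * d i (n i) = 1"
proof -
  have "gcd (l i (n i)) (d i (n i)) = 1" using assms unfolding valid_data_def by auto
  then show ?thesis using bezout_int[of "l i (n i)" "d i (n i)"] that by auto
qed

lemma Gcd_M'_EE_dvd_mu_hat: "Gcd (M'_set EE r n l d) dvd mu r l d n"
proof -
  have "\<bar>mu_hat r n l d\<bar> \<in> M'_set EE r n l d" unfolding M'_set_def by auto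
  then show ?thesis unfolding mu_hat_eq_mu by (metis Gcd_dvd dvd_abs_iff)
qed

lemma Gcd_M'_EE_dvd_nu:
  assumes "i0 \<le> r" "i1 \<le> r" "i0 \<noteq> i1" "\<forall>i\<in>{0..r} - {i1}. 1 \<le> j i \<and> j i \<le> n i"
  shows "Gcd (M'_set EE r n l d) dvd nu_hat n l d i0 (j i0) * (\<Prod>i\<in>{0..r} - {i0, i1}. l i (j i))"
proof -
  have "\<bar>nu_hat n l d i0 (j i0)\<bar> * (\<Prod>i\<in>{0..r} - {i0, i1}. l i (j i)) \<in> M'_set EE r n l d"
    unfolding M'_set_def if_P[OF refl] using assms by blast
  then have "Gcd (M'_set EE r n l d) dvd \<bar>nu_hat n l d i0 (j i0)\<bar> * (\<Prod>i\<in>{0..r} - {i0, i1}. l i (j i))"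
    by (rule Gcd_dvd)
  then show ?thesis by (cases "nu_hat n l d i0 (j i0) \<ge> 0") auto
qed

lemma Gcd_M'_EE_dvd_cross:
  assumes vd: "valid_data r n l d" and i: "i0 \<le> r" "i1 \<le> r" "i0 \<noteq> i1"
    and j: "\<forall>i\<in>{0..r} - {i0, i1}. 1 \<le> j i \<and> j i \<le> n i"
    and j12: "1 \<le> j1" "j1 \<le> n i0" "1 \<le> j2" "j2 \<le> n i0"
  shows "Gcd (M'_set EE r n l d) dvd
    (d i0 j1 * l i0 j2 - d i0 j2 * l i0 j1) * (\<Prod>i\<in>{0..r} - {i0, i1}. l i (j i))"
proof -
  obtain u v where uv: "u * l i0 (n i0) + v * d i0 (n i0) = 1"
    using valid_data_bezout[OF vd i(1)] by blast
  have nu: "Gcd (M'_set EE r n l d) dvd nu_hat n l d i0 x * (\<Prod>i\<in>{0..r} - {i0, i1}. l i (j i))"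
    if "1 \<le> x" "x \<le> n i0" for x
  proof -
    have "(\<Prod>i\<in>{0..r} - {i0, i1}. l i ((j(i0 := x)) i)) = (\<Prod>i\<in>{0..r} - {i0, i1}. l i (j i))"
      by (rule prod.cong) auto
    then show ?thesis
      using Gcd_M'_EE_dvd_nu[OF i, of "j(i0 := x)" n l d] j that by auto
  qed
  show ?thesis
    by (rule bezout_dvd_cross[OF uv]) (use nu[OF j12(1,2)] nu[OF j12(3,4)] in \<open>simp_all add: nu_hat_def\<close>)
qed

lemma Gcd_M'_EE_dvd_mu:
  assumes vd: "valid_data r n l d" and j: "\<forall>i\<le>r. 1 \<le> j i \<and> j i \<le> n i"
  shows "Gcd (M'_set EE r n l d) dvd mu r l d j"
proof -
  let ?g = "Gcd (M'_set EE r n l d)"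
  let ?J = "\<lambda>m i. if i < m then j i else n i"
  have r: "1 \<le> r" and n: "\<forall>i\<le>r. 1 \<le> n i" using vd unfolding valid_data_def by auto
  have "?g dvd mu r l d (?J m)" for m
  proof (induction m)
    case 0
    then show ?case using Gcd_M'_EE_dvd_mu_hat by simp
  next
    case (Suc m)
    show ?case
    proof (cases "m \<le> r")
      case False
      then have "mu r l d (?J (Suc m)) = mu r l d (?J m)" by (intro mu_cong) auto
      then show ?thesis using Suc.IH by simp
    next
      case m: True
      obtain u v where uv: "u * l m (n m) + v * d m (n m) = 1"
        using valid_data_bezout[OF vd m] by blast
      have nu: "?g dvd nu_hat n l d m (j m) * (\<Prod>i'\<in>{0..r} - {m, i}. l i' (?J m i'))"
        if "i \<le> r" "i \<noteq> m" for i
      proof -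
        have "(\<Prod>i'\<in>{0..r} - {m, i}. l i' (?J (Suc m) i')) = (\<Prod>i'\<in>{0..r} - {m, i}. l i' (?J m i'))"
          by (rule prod.cong) auto
        then show ?thesis
          using Gcd_M'_EE_dvd_nu[OF m that(1) that(2)[symmetric], of "?J (Suc m)" n l d] j n by auto
      qed
      have "?J (Suc m) = (?J m)(m := j m)" by auto
      then show ?thesis using dvd_mu_update[OF r m _ uv Suc.IH nu] by simp
    qed
  qed
  moreover have "mu r l d (?J (Suc r)) = mu r l d j" by (rule mu_cong) auto
  ultimately show ?thesis by metis
qed

lemma Gcd_M'_dvd_prod:
  assumes "t \<noteq> EE" "i1 \<le> r" "\<forall>i\<in>{0..r} - {i1}. 1 \<le> j i \<and> j i \<le> n i"
  shows "Gcd (M'_set t r n l d) dvd (\<Prod>i\<in>{0..r} - {i1}. l i (j i))"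
proof -
  have "(\<Prod>i\<in>{0..r} - {i1}. l i (j i)) \<in> M'_set t r n l d"
    unfolding M'_set_def using assms by auto
  then show ?thesis by (rule Gcd_dvd)
qed

lemma mu_reindex:
  assumes "bij_betw k {0..<Suc r} {0..r}"
  shows "(\<Sum>b<Suc r. d (k b) (J (k b)) * prod_others r (\<lambda>c. l (k c) (J (k c))) b) = mu r l d J"
proof -
  have "(\<Sum>b<Suc r. d (k b) (J (k b)) * prod_others r (\<lambda>c. l (k c) (J (k c))) b) =
      (\<Sum>b\<in>{0..<Suc r}. d (k b) (J (k b)) * (\<Prod>i\<in>{0..r} - {k b}. l i (J i)))"
    by (intro sum.cong) (auto simp: prod_others_reindex[OF assms, of _ "\<lambda>i. l i (J i)"])
  also have "\<dots> = mu r l d J"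
    unfolding mu_def by (rule sum.reindex_bij_betw[OF assms])
  finally show ?thesis .
qed

lemma det_col_mat_mu:
  assumes "bij_betw k {0..<Suc r} {0..r}"
  shows "det (col_mat r k (\<lambda>b. l (k b) (J (k b))) (\<lambda>b. d (k b) (J (k b)))) = unit_cofactor r k r * mu r l d J"
  by (simp only: det_col_mat_bij[OF assms] mu_reindex[OF assms])

lemma Gcd_M'_EE_dvd_det_inj:
  assumes vd: "valid_data r n l d"
    and k: "inj_on k {0..<Suc r}" "k ` {0..<Suc r} \<subseteq> {0..r}"
    and jf: "\<And>b. b < Suc r \<Longrightarrow> 1 \<le> jf b \<and> jf b \<le> n (k b)"
  shows "Gcd (M'_set EE r n l d) dvd det (col_mat r k (\<lambda>b. l (k b) (jf b)) (\<lambda>b. d (k b) (jf b)))"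
proof -
  have "k ` {0..<Suc r} = {0..r}"
    using k by (intro card_subset_eq) (auto simp: card_image)
  with k(1) have bij: "bij_betw k {0..<Suc r} {0..r}" by (simp add: bij_betw_def)
  obtain J where J: "\<And>b. b \<in> {0..<Suc r} \<Longrightarrow> jf b = J (k b)"
    and J_range: "\<And>i. i \<in> k ` {0..<Suc r} \<Longrightarrow> 1 \<le> J i \<and> J i \<le> n i"
    using obtain_block_index[OF k(1), of "\<lambda>i j. 1 \<le> j \<and> j \<le> n i"] jf by auto
  have "col_mat r k (\<lambda>b. l (k b) (jf b)) (\<lambda>b. d (k b) (jf b)) =
      col_mat r k (\<lambda>b. l (k b) (J (k b))) (\<lambda>b. d (k b) (J (k b)))"
    by (rule eq_matI) (auto simp: col_mat_def J)
  then have "det (col_mat r k (\<lambda>b. l (k b) (jf b)) (\<lambda>b. d (k b) (jf b))) = unit_cofactor r k r * mu r l d J"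
    by (simp only: det_col_mat_mu[OF bij])
  moreover have "Gcd (M'_set EE r n l d) dvd mu r l d J"
    by (rule Gcd_M'_EE_dvd_mu[OF vd]) (use J_range \<open>k ` {0..<Suc r} = {0..r}\<close> in auto)
  ultimately show ?thesis by simp
qed

lemma Gcd_M'_EE_dvd_det_repeated:
  assumes vd: "valid_data r n l d"
    and b: "b1 \<noteq> b2" "b1 < Suc r" "b2 < Suc r" "k b1 = k b2"
    and k: "k ` {0..<Suc r} \<subseteq> {0..r}"
    and jf: "\<And>b. b < Suc r \<Longrightarrow> 1 \<le> jf b \<and> jf b \<le> n (k b)"
  shows "Gcd (M'_set EE r n l d) dvd det (col_mat r k (\<lambda>b. l (k b) (jf b)) (\<lambda>b. d (k b) (jf b)))"
proof -
  let ?S = "{0..<Suc r} - {b1}" and ?S2 = "{0..<Suc r} - {b1, b2}"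
  let ?R = "\<Prod>c\<in>?S2. l (k c) (jf c)"
  define i0 where "i0 = k b1"
  have det: "det (col_mat r k (\<lambda>b. l (k b) (jf b)) (\<lambda>b. d (k b) (jf b))) =
      unit_cofactor r k b1 * ?R * (d i0 (jf b1) * l i0 (jf b2) - d i0 (jf b2) * l i0 (jf b1))"
    using det_col_mat_repeated[OF b] b(4) by (simp add: i0_def)
  show ?thesis
  proof (cases "inj_on k ?S")
    case False
    then obtain b3 b4 where "b3 \<in> ?S" "b4 \<in> ?S" "b3 \<noteq> b4" "k b3 = k b4"
      unfolding inj_on_def by blast
    then have "unit_cofactor r k b1 = 0"
      using b by (intro unit_cofactor_eq_0_if_repeated[of b3 b4]) auto
    then show ?thesis by (simp add: det)
  next
    case True
    have "k ` ?S \<subseteq> {0..r}" "card {0..r} = Suc (card ?S)" using k b(2) by auto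
    then obtain i1 where i1: "i1 \<in> {0..r}" "k ` ?S = {0..r} - {i1}"
      using inj_on_image_eq_Diff[OF finite_atLeastAtMost True] by metis
    have "i0 \<in> k ` ?S" using b unfolding i0_def by (intro image_eqI[of _ _ b2]) auto
    then have i0: "i0 \<le> r" "i0 \<noteq> i1" using i1(2) by auto
    have inj2: "inj_on k ?S2" using True by (rule inj_on_subset) auto
    have "k ` ?S2 = k ` (?S - {b2})" by (rule arg_cong[where f = "image k"]) auto
    also have "\<dots> = {0..r} - {i0, i1}"
      using b i1(2) by (subst inj_on_image_set_diff[OF True]) (auto simp: i0_def)
    finally have img2: "k ` ?S2 = {0..r} - {i0, i1}" .
    have "\<And>c. c \<in> ?S2 \<Longrightarrow> 1 \<le> jf c \<and> jf c \<le> n (k c)" using jf by auto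
    then obtain J where "?R = (\<Prod>i\<in>k ` ?S2. l i (J i))"
      and J_range: "\<And>i. i \<in> k ` ?S2 \<Longrightarrow> 1 \<le> J i \<and> J i \<le> n i"
      using obtain_block_prod[OF inj2, where l = l] by blast
    then have "?R = (\<Prod>i\<in>{0..r} - {i0, i1}. l i (J i))" by (simp only: img2)
    moreover have "Gcd (M'_set EE r n l d) dvd
        (d i0 (jf b1) * l i0 (jf b2) - d i0 (jf b2) * l i0 (jf b1)) * (\<Prod>i\<in>{0..r} - {i0, i1}. l i (J i))"
      by (rule Gcd_M'_EE_dvd_cross[OF vd i0(1) _ i0(2)])
        (use i1 J_range img2 jf[of b1] jf[of b2] b in \<open>auto simp: i0_def\<close>)
    ultimately show ?thesis unfolding det by (simp add: mult.commute mult.left_commute)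
  qed
qed

lemma Gcd_M'_dvd_prod_others:
  assumes t: "t \<noteq> EE" and b: "b < Suc r"
    and inj: "inj_on k ({0..<Suc r} - {b})" and k: "k ` ({0..<Suc r} - {b}) \<subseteq> {0..r}"
    and jf: "\<And>c. c < Suc r \<Longrightarrow> c \<noteq> b \<Longrightarrow> 1 \<le> jf c \<and> jf c \<le> n (k c)"
  shows "Gcd (M'_set t r n l d) dvd prod_others r (\<lambda>c. l (k c) (jf c)) b"
proof -
  obtain i1 where i1: "i1 \<in> {0..r}" "k ` ({0..<Suc r} - {b}) = {0..r} - {i1}"
    using inj_on_image_eq_Diff[OF finite_atLeastAtMost inj k] b by auto
  have "\<And>c. c \<in> {0..<Suc r} - {b} \<Longrightarrow> 1 \<le> jf c \<and> jf c \<le> n (k c)" using jf by auto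
  then obtain J where "prod_others r (\<lambda>c. l (k c) (jf c)) b = (\<Prod>i\<in>k ` ({0..<Suc r} - {b}). l i (J i))"
    and J_range: "\<And>i. i \<in> k ` ({0..<Suc r} - {b}) \<Longrightarrow> 1 \<le> J i \<and> J i \<le> n i"
    unfolding prod_others_def using obtain_block_prod[OF inj, where l = l] by blast
  then show ?thesis using Gcd_M'_dvd_prod[OF t, of i1 r J n l d] i1 J_range by auto
qed

section \<open>Minors of P\<close>

definition col_block :: "col \<Rightarrow> nat" where
  "col_block c = (case c of V i j \<Rightarrow> i | _ \<Rightarrow> 0)"

definition col_index :: "col \<Rightarrow> nat" where
  "col_index c = (case c of V i j \<Rightarrow> j | _ \<Rightarrow> 0)"

definition col_l :: "(nat \<Rightarrow> nat \<Rightarrow> int) \<Rightarrow> col \<Rightarrow> int" where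
  "col_l l c = (case c of V i j \<Rightarrow> l i j | _ \<Rightarrow> 0)"

definition minor_mat :: "nat \<Rightarrow> (nat \<Rightarrow> nat \<Rightarrow> int) \<Rightarrow> (nat \<Rightarrow> nat \<Rightarrow> int) \<Rightarrow> (nat \<Rightarrow> col) \<Rightarrow> int mat" where
  "minor_mat r l d f =
     col_mat r (\<lambda>b. col_block (f b)) (\<lambda>b. col_l l (f b)) (\<lambda>b. colvec r l d (f b) (Suc r))"

lemma minors_abs_eq:
  "minors_abs t r n l d =
    {\<bar>det (minor_mat r l d f)\<bar> | f. f ` {0..<Suc r} \<subseteq> cols t r n \<and> inj_on f {0..<Suc r}}"
proof -
  have "mat (r + 1) (r + 1) (\<lambda>(a, b). colvec r l d (f b) (a + 1)) = minor_mat r l d f" for f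
  proof (rule eq_matI)
    fix a b assume "a < dim_row (minor_mat r l d f)" "b < dim_col (minor_mat r l d f)"
    then show "mat (r + 1) (r + 1) (\<lambda>(a, b). colvec r l d (f b) (a + 1)) $$ (a, b) = minor_mat r l d f $$ (a, b)"
      by (cases "f b"; cases "a < r") (auto simp: less_Suc_eq minor_mat_def col_mat_def colvec_def col_block_def col_l_def uvec_def)
  qed (auto simp: minor_mat_def col_mat_def)
  then show ?thesis unfolding minors_abs_def by simp
qed

lemma vcolsD:
  assumes "c \<in> vcols r n"
  shows "col_block c \<le> r" "1 \<le> col_index c" "col_index c \<le> n (col_block c)"
    "col_l l c = l (col_block c) (col_index c)"
    "colvec r l d c (Suc r) = d (col_block c) (col_index c)"
  using assms by (auto simp: vcols_def col_block_def col_index_def col_l_def colvec_def basis_e_def uvec_def)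

lemma minor_mat_vcols:
  assumes "\<And>b. b < Suc r \<Longrightarrow> f b \<in> vcols r n"
  shows "minor_mat r l d f = col_mat r (\<lambda>b. col_block (f b))
    (\<lambda>b. l (col_block (f b)) (col_index (f b))) (\<lambda>b. d (col_block (f b)) (col_index (f b)))"
  by (rule eq_matI) (auto simp: minor_mat_def col_mat_def vcolsD[OF assms])

lemma Gcd_M'_EE_dvd_minor:
  assumes vd: "valid_data r n l d" and f: "f ` {0..<Suc r} \<subseteq> vcols r n"
  shows "Gcd (M'_set EE r n l d) dvd det (minor_mat r l d f)"
proof -
  let ?k = "\<lambda>b. col_block (f b)" and ?jf = "\<lambda>b. col_index (f b)"
  have fV: "\<And>b. b < Suc r \<Longrightarrow> f b \<in> vcols r n" using f by auto
  have k: "?k ` {0..<Suc r} \<subseteq> {0..r}" and jf: "\<And>b. b < Suc r \<Longrightarrow> 1 \<le> ?jf b \<and> ?jf b \<le> n (?k b)"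
    using vcolsD(1-3)[OF fV] by auto
  have minor: "minor_mat r l d f = col_mat r ?k (\<lambda>b. l (?k b) (?jf b)) (\<lambda>b. d (?k b) (?jf b))"
    by (rule minor_mat_vcols[OF fV])
  have "Gcd (M'_set EE r n l d) dvd det (col_mat r ?k (\<lambda>b. l (?k b) (?jf b)) (\<lambda>b. d (?k b) (?jf b)))"
  proof (cases "inj_on ?k {0..<Suc r}")
    case True
    then show ?thesis by (rule Gcd_M'_EE_dvd_det_inj[OF vd _ k jf])
  next
    case False
    then obtain b1 b2 where "b1 \<noteq> b2" "b1 < Suc r" "b2 < Suc r" "?k b1 = ?k b2"
      unfolding inj_on_def by auto
    then show ?thesis by (rule Gcd_M'_EE_dvd_det_repeated[OF vd _ _ _ _ k jf])
  qed
  then show ?thesis by (simp only: minor)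
qed

lemma Gcd_M'_dvd_minor_non_EE:
  assumes t: "t \<noteq> EE" and f: "f ` {0..<Suc r} \<subseteq> cols t r n"
  shows "Gcd (M'_set t r n l d) dvd det (minor_mat r l d f)"
proof -
  let ?k = "\<lambda>b. col_block (f b)" and ?jf = "\<lambda>b. col_index (f b)" and ?w = "\<lambda>b. col_l l (f b)"
  have "Gcd (M'_set t r n l d) dvd unit_cofactor r ?k b * prod_others r ?w b" if b: "b < Suc r" for b
  proof (cases "\<forall>c. c < Suc r \<longrightarrow> c \<noteq> b \<longrightarrow> f c \<in> vcols r n")
    case False
    then obtain c where c: "c < Suc r" "c \<noteq> b" "f c \<notin> vcols r n" by blast
    have "f c \<in> cols t r n" using f c(1) by auto
    then have "f c \<in> {Up, Down}" using c(3) by (cases t) (auto simp: cols_def)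
    then have "?w c = 0" by (auto simp: col_l_def)
    then have "prod_others r ?w b = 0" unfolding prod_others_def using c by (intro prod_zero) auto
    then show ?thesis by simp
  next
    case vcols: True
    show ?thesis
    proof (cases "inj_on ?k ({0..<Suc r} - {b})")
      case True
      have "prod_others r ?w b = prod_others r (\<lambda>c. l (?k c) (?jf c)) b"
        by (rule prod_others_cong) (use vcols vcolsD(4) in auto)
      moreover have "Gcd (M'_set t r n l d) dvd prod_others r (\<lambda>c. l (?k c) (?jf c)) b"
        by (rule Gcd_M'_dvd_prod_others[OF t b True]) (use vcols vcolsD(1-3) in auto)
      ultimately show ?thesis by simp
    next
      case False
      then obtain b3 b4 where "b3 \<in> {0..<Suc r} - {b}" "b4 \<in> {0..<Suc r} - {b}" "b3 \<noteq> b4" "?k b3 = ?k b4"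
        unfolding inj_on_def by blast
      then have "unit_cofactor r ?k b = 0" using b by (intro unit_cofactor_eq_0_if_repeated[of b3 b4]) auto
      then show ?thesis by simp
    qed
  qed
  then show ?thesis
    unfolding minor_mat_def det_col_mat_factor by (intro dvd_sum) (simp add: mult.assoc)
qed

definition skip_cols :: "nat \<Rightarrow> nat \<Rightarrow> (nat \<Rightarrow> nat) \<Rightarrow> col \<Rightarrow> nat \<Rightarrow> col" where
  "skip_cols r i1 j z b = (if b < r then V (skip_index i1 b) (j (skip_index i1 b)) else z)"

lemma skip_index_le: "b < r \<Longrightarrow> skip_index i1 b \<le> r"
  by (simp add: skip_index_def)

lemma skip_cols_less:
  assumes "b < r"
  shows "col_block (skip_cols r i1 j z b) = skip_index i1 b"
    "col_l l (skip_cols r i1 j z b) = l (skip_index i1 b) (j (skip_index i1 b))"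
    "colvec r l d (skip_cols r i1 j z b) (Suc r) = d (skip_index i1 b) (j (skip_index i1 b))"
  using assms skip_index_le[OF assms, of i1]
  by (simp_all add: skip_cols_def col_block_def col_l_def colvec_def basis_e_def uvec_def)

lemma skip_cols_minor_mem:
  assumes i1: "i1 \<le> r" and j: "\<forall>i\<in>{0..r} - {i1}. 1 \<le> j i \<and> j i \<le> n i"
    and z: "z \<in> cols t r n" "\<And>b. b < r \<Longrightarrow> z \<noteq> V (skip_index i1 b) (j (skip_index i1 b))"
  shows "\<bar>det (minor_mat r l d (skip_cols r i1 j z))\<bar> \<in> minors_abs t r n l d"
proof -
  have skip: "skip_index i1 b \<in> {0..r} - {i1}" if "b < r" for b
  proof -
    have "b \<in> {0..<r}" using that by simp
    then show ?thesis using skip_index_bij[OF i1] unfolding bij_betw_def by blast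
  qed
  have "vcols r n \<subseteq> cols t r n" by (cases t) (auto simp: cols_def)
  then have "skip_cols r i1 j z ` {0..<Suc r} \<subseteq> cols t r n"
    using skip j z(1) by (auto simp: skip_cols_def vcols_def less_Suc_eq)
  moreover have "inj_on (skip_cols r i1 j z) {0..<Suc r}"
  proof (rule inj_onI)
    fix a b assume ab: "a \<in> {0..<Suc r}" "b \<in> {0..<Suc r}" "skip_cols r i1 j z a = skip_cols r i1 j z b"
    have "inj_on (skip_index i1) {0..<r}" using skip_index_bij[OF i1] by (rule bij_betw_imp_inj_on)
    then show "a = b" using ab z(2) by (auto simp: skip_cols_def less_Suc_eq inj_on_def split: if_splits)
  qed
  ultimately show ?thesis unfolding minors_abs_eq by blast
qed

lemma abs_unit_cofactor_skip_cols: "\<bar>unit_cofactor r (\<lambda>b. col_block (skip_cols r i1 j z b)) r\<bar> = 1"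
  by (rule abs_unit_cofactor_skip_index) (simp add: skip_cols_less)

lemma prod_skip_index:
  "i1 \<le> r \<Longrightarrow> (\<Prod>c\<in>{0..<r}. l (skip_index i1 c) (j (skip_index i1 c))) = (\<Prod>i\<in>{0..r} - {i1}. l i (j i))"
  by (rule prod.reindex_bij_betw[OF skip_index_bij])

lemma prod_skip_index_Diff:
  assumes "i1 \<le> r" "p < r"
  shows "(\<Prod>c\<in>{0..<r} - {p}. l (skip_index i1 c) (j (skip_index i1 c))) =
    (\<Prod>i\<in>{0..r} - {skip_index i1 p, i1}. l i (j i))"
proof -
  have "skip_index i1 p \<in> {0..r} - {i1}" using assms(2) by (auto simp: skip_index_def)
  then have "bij_betw (skip_index i1) ({0..<r} - {p}) ({0..r} - {i1} - {skip_index i1 p})"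
    using skip_index_bij[OF assms(1)] assms(2) by (intro bij_betw_DiffI) (auto simp: bij_betw_def)
  moreover have "{0..r} - {i1} - {skip_index i1 p} = {0..r} - {skip_index i1 p, i1}" by auto
  ultimately have "bij_betw (skip_index i1) ({0..<r} - {p}) ({0..r} - {skip_index i1 p, i1})" by simp
  then show ?thesis by (rule prod.reindex_bij_betw)
qed

lemma prod_l_nonneg:
  assumes "valid_data r n l d" "\<And>i. i \<in> A \<Longrightarrow> i \<le> r \<and> 1 \<le> j i \<and> j i \<le> n i"
  shows "0 \<le> (\<Prod>i\<in>A. l i (j i))"
proof (rule prod_nonneg)
  fix i assume "i \<in> A"
  then have "i \<le> r" "1 \<le> j i" "j i \<le> n i" using assms(2) by auto
  then have "1 \<le> l i (j i)" using assms(1) unfolding valid_data_def by blast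
  then show "0 \<le> l i (j i)" by simp
qed

lemma Gcd_minors_dvd_prod:
  assumes t: "t \<noteq> EE" and vd: "valid_data r n l d"
    and i1: "i1 \<le> r" and j: "\<forall>i\<in>{0..r} - {i1}. 1 \<le> j i \<and> j i \<le> n i"
  shows "Gcd (minors_abs t r n l d) dvd (\<Prod>i\<in>{0..r} - {i1}. l i (j i))"
proof -
  define z where "z = (if t = EP then Down else Up)"
  have z: "z \<in> cols t r n" "z \<in> {Up, Down}" using t by (cases t; simp add: z_def cols_def)+
  let ?f = "skip_cols r i1 j z"
  let ?k = "\<lambda>b. col_block (?f b)" and ?w = "\<lambda>b. col_l l (?f b)"
  have w_r: "?w r = 0" using z(2) by (auto simp: skip_cols_def col_l_def)
  have "prod_others r ?w b = 0" if "b < r" for b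
    unfolding prod_others_def using that w_r by (intro prod_zero) auto
  then have "det (minor_mat r l d ?f) = colvec r l d z (Suc r) * unit_cofactor r ?k r * prod_others r ?w r"
    by (simp add: minor_mat_def det_col_mat_factor skip_cols_def)
  moreover have "\<bar>colvec r l d z (Suc r)\<bar> = 1" using z(2) by (auto simp: colvec_def uvec_def)
  moreover have "prod_others r ?w r = (\<Prod>i\<in>{0..r} - {i1}. l i (j i))"
  proof -
    have "prod_others r ?w r = (\<Prod>c\<in>{0..<r}. l (skip_index i1 c) (j (skip_index i1 c)))"
      unfolding prod_others_def by (rule prod.cong) (auto simp: skip_cols_less)
    also have "\<dots> = (\<Prod>i\<in>{0..r} - {i1}. l i (j i))" by (rule prod_skip_index[OF i1])
    finally show ?thesis .
  qed
  moreover have "0 \<le> (\<Prod>i\<in>{0..r} - {i1}. l i (j i))" by (rule prod_l_nonneg[OF vd]) (use j in auto)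
  ultimately have "\<bar>det (minor_mat r l d ?f)\<bar> = (\<Prod>i\<in>{0..r} - {i1}. l i (j i))"
    using abs_unit_cofactor_skip_cols by (simp add: abs_mult)
  moreover have "\<bar>det (minor_mat r l d ?f)\<bar> \<in> minors_abs t r n l d"
    by (rule skip_cols_minor_mem[OF i1 j z(1)]) (use z(2) in auto)
  ultimately show ?thesis by (metis Gcd_dvd)
qed

lemma Gcd_minors_EE_dvd_mu_hat:
  assumes vd: "valid_data r n l d"
  shows "Gcd (minors_abs EE r n l d) dvd \<bar>mu_hat r n l d\<bar>"
proof -
  let ?f = "skip_cols r 0 n (V 0 (n 0))"
  let ?k = "\<lambda>b. col_block (?f b)"
  have n: "\<forall>i\<le>r. 1 \<le> n i" using vd unfolding valid_data_def by simp
  have fV: "?f b \<in> vcols r n" if "b < Suc r" for b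
    using that n skip_index_le[of b r 0] by (auto simp: skip_cols_def vcols_def)
  have "bij_betw ?k {0..<r} ({0..r} - {0})"
    using skip_index_bij[of 0 r] by (rule bij_betw_cong[THEN iffD1, rotated]) (auto simp: skip_cols_def col_block_def)
  then have "bij_betw ?k ({0..<r} \<union> {r}) (({0..r} - {0}) \<union> {?k r})"
    by (subst notIn_Un_bij_betw3[symmetric]) (auto simp: skip_cols_def col_block_def)
  moreover have "{0..<r} \<union> {r} = {0..<Suc r}" "({0..r} - {0}) \<union> {?k r} = {0..r}"
    by (auto simp: skip_cols_def col_block_def)
  ultimately have bij: "bij_betw ?k {0..<Suc r} {0..r}" by simp
  have "col_index (?f b) = n (?k b)" for b
    by (simp add: skip_cols_def col_index_def col_block_def)
  then have "det (minor_mat r l d ?f) = det (col_mat r ?k (\<lambda>b. l (?k b) (n (?k b))) (\<lambda>b. d (?k b) (n (?k b))))"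
    by (simp add: minor_mat_vcols[OF fV])
  also have "\<dots> = unit_cofactor r ?k r * mu r l d n" by (rule det_col_mat_mu[OF bij])
  finally have "\<bar>det (minor_mat r l d ?f)\<bar> = \<bar>mu r l d n\<bar>"
    using abs_unit_cofactor_skip_cols by (simp add: abs_mult)
  moreover have "\<bar>det (minor_mat r l d ?f)\<bar> \<in> minors_abs EE r n l d"
    by (rule skip_cols_minor_mem) (use n in \<open>auto simp: cols_def vcols_def skip_index_def\<close>)
  ultimately show ?thesis unfolding mu_hat_eq_mu by (metis Gcd_dvd)
qed

lemma Gcd_minors_EE_dvd_nu:
  assumes vd: "valid_data r n l d" and i: "i0 \<le> r" "i1 \<le> r" "i0 \<noteq> i1"
    and j: "\<forall>i\<in>{0..r} - {i1}. 1 \<le> j i \<and> j i \<le> n i"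
  shows "Gcd (minors_abs EE r n l d) dvd \<bar>nu_hat n l d i0 (j i0)\<bar> * (\<Prod>i\<in>{0..r} - {i0, i1}. l i (j i))"
proof (cases "j i0 = n i0")
  case True
  then show ?thesis by (simp add: nu_hat_def)
next
  case False
  have bij: "bij_betw (skip_index i1) {0..<r} ({0..r} - {i1})" by (rule skip_index_bij[OF i(2)])
  moreover have "i0 \<in> {0..r} - {i1}" using i by auto
  ultimately have "i0 \<in> skip_index i1 ` {0..<r}" unfolding bij_betw_def by simp
  then obtain p where p: "p < r" "skip_index i1 p = i0" by auto
  let ?f = "skip_cols r i1 j (V i0 (n i0))"
  let ?k = "\<lambda>b. col_block (?f b)" and ?w = "\<lambda>b. col_l l (?f b)" and ?y = "\<lambda>b. colvec r l d (?f b) (Suc r)"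
  let ?R = "\<Prod>i\<in>{0..r} - {i0, i1}. l i (j i)"
  have "(\<Prod>c\<in>{0..<Suc r} - {r, p}. ?w c) = (\<Prod>c\<in>{0..<r} - {p}. l (skip_index i1 c) (j (skip_index i1 c)))"
    by (rule prod.cong) (auto simp: skip_cols_less)
  also have "\<dots> = ?R" using prod_skip_index_Diff[OF i(2) p(1)] p(2) by simp
  finally have R: "(\<Prod>c\<in>{0..<Suc r} - {r, p}. ?w c) = ?R" .
  have "?y r * ?w p - ?y p * ?w r = nu_hat n l d i0 (j i0)"
    using p i(1) by (simp add: skip_cols_less skip_cols_def col_l_def colvec_def basis_e_def uvec_def nu_hat_def)
  then have "det (minor_mat r l d ?f) = unit_cofactor r ?k r * ?R * nu_hat n l d i0 (j i0)"
    unfolding minor_mat_def R[symmetric]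
    by (subst det_col_mat_repeated[of r p]) (use p in \<open>auto simp: skip_cols_less skip_cols_def col_block_def\<close>)
  moreover have "0 \<le> ?R" by (rule prod_l_nonneg[OF vd]) (use j in auto)
  ultimately have "\<bar>det (minor_mat r l d ?f)\<bar> = \<bar>nu_hat n l d i0 (j i0)\<bar> * ?R"
    using abs_unit_cofactor_skip_cols by (simp add: abs_mult)
  moreover have "\<bar>det (minor_mat r l d ?f)\<bar> \<in> minors_abs EE r n l d"
  proof (rule skip_cols_minor_mem[OF i(2) j])
    show "V i0 (n i0) \<in> cols EE r n" using vd i(1) unfolding valid_data_def by (auto simp: cols_def vcols_def)
    show "V i0 (n i0) \<noteq> V (skip_index i1 b) (j (skip_index i1 b))" if "b < r" for b
      using False that p bij_betw_imp_inj_on[OF bij] by (auto simp: inj_on_def)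
  qed
  ultimately show ?thesis by (metis Gcd_dvd)
qed

lemma Gcd_minors_dvd_M'_set:
  assumes vd: "valid_data r n l d" and m: "m \<in> M'_set t r n l d"
  shows "Gcd (minors_abs t r n l d) dvd m"
proof (cases "t = EE")
  case True
  with m consider "m = \<bar>mu_hat r n l d\<bar>"
    | i0 i1 j where "m = \<bar>nu_hat n l d i0 (j i0)\<bar> * (\<Prod>i\<in>{0..r} - {i0, i1}. l i (j i))"
      "i0 \<le> r" "i1 \<le> r" "i0 \<noteq> i1" "\<forall>i\<in>{0..r} - {i1}. 1 \<le> j i \<and> j i \<le> n i"
    unfolding M'_set_def by auto
  then show ?thesis
    by cases (use True Gcd_minors_EE_dvd_mu_hat[OF vd] Gcd_minors_EE_dvd_nu[OF vd] in auto)
next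
  case False
  with m obtain i1 j where "m = (\<Prod>i\<in>{0..r} - {i1}. l i (j i))"
    "i1 \<le> r" "\<forall>i\<in>{0..r} - {i1}. 1 \<le> j i \<and> j i \<le> n i"
    unfolding M'_set_def by auto
  then show ?thesis using Gcd_minors_dvd_prod[OF False vd] by simp
qed

lemma Gcd_M'_set_dvd_minors:
  assumes vd: "valid_data r n l d" and m: "m \<in> minors_abs t r n l d"
  shows "Gcd (M'_set t r n l d) dvd m"
proof -
  obtain f where m_def: "m = \<bar>det (minor_mat r l d f)\<bar>" and f: "f ` {0..<Suc r} \<subseteq> cols t r n"
    using m unfolding minors_abs_eq by auto
  have "Gcd (M'_set t r n l d) dvd det (minor_mat r l d f)"
  proof (cases "t = EE")
    case True
    then show ?thesis using Gcd_M'_EE_dvd_minor[OF vd] f by (simp add: cols_def)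
  next
    case False
    then show ?thesis using Gcd_M'_dvd_minor_non_EE f by blast
  qed
  then show ?thesis unfolding m_def by simp
qed

theorem proposition4p11:
  fixes t :: ptype and r :: nat and n :: "nat \<Rightarrow> nat" and l d :: "nat \<Rightarrow> nat \<Rightarrow> int"
  assumes "valid_data r n l d"
    and "defining_matrix t r n l d"
  shows "Gcd (minors_abs t r n l d) = Gcd (M'_set t r n l d)"
proof (rule associated_eqI)
  show "Gcd (minors_abs t r n l d) dvd Gcd (M'_set t r n l d)"
    by (rule Gcd_greatest) (rule Gcd_minors_dvd_M'_set[OF assms(1)])
  show "Gcd (M'_set t r n l d) dvd Gcd (minors_abs t r n l d)"
    by (rule Gcd_greatest) (rule Gcd_M'_set_dvd_minors[OF assms(1)])
qed simp_all

end
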